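(* Assume the diffusion targeting $P$ satisfies condition (D) with $\alpha,\beta>0$ and condition (G) with $\lambda_a>0$ and $q_a\in\{0,1\}$. Let $w(x)=(v^2+\|x\|_2^2)^{q_w-u}$ with $q_w\ge0$, $u\ge0$, $v>0$, and if $q_a=1$ assume $q_w-u<2\alpha/\lambda_a$. Let $k(x,x')=w(x)w(x')\langle x,x'\rangle$. Then there is $g\in\mathcal{G}_{k\mathrm{Id}}$ with $\|g\|_{\mathcal{G}_{k\mathrm{Id}}}=\sqrt D$ such that, for some $\nu\in\mathbb{R}$ and $\eta>0$, $\mathcal{T}_Pg(x)\ge\nu$ for all $x\in\mathbb{R}^D$ and $\liminf_{\|x\|_2\to\infty}\|x\|_2^{-2(q_w-u+1)}\mathcal{T}_Pg(x)\ge\eta$.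
   Context: Setting: $P$ has a positive $C^1$ density $p$ on $\mathbb{R}^D$; $\sigma:\mathbb{R}^D\to\mathbb{R}^{D\times D'}$, $a=\sigma\sigma^\top$, $c$ skew-symmetric, $m=a+c$ with $pm$ continuously differentiable; $b=\langle\nabla,pm\rangle/(2p)$ with $\langle\nabla,F\rangle_i=\sum_j\partial_jF_{ji}$; $\mathcal{T}_Pg=2\langle b,g\rangle+\langle m,\nabla g\rangle$ with $(\nabla g)_{ij}=\partial_ig_j$ and Frobenius pairing. Condition (G): $\|b(x)\|_2\le\frac{\lambda_b}4(1+\|x\|_2)$, $\|\sigma(x)\|_F\le\frac{\lambda_\sigma}4(1+\|x\|_2)$, $\|a(x)\|_{\mathrm{op}}\le\frac{\lambda_a}4(1+\|x\|_2^{q_a+1})$. Condition (D) (dissipativity): $2\langle b(x),x\rangle+\|\sigma(x)\|_F^2\le-\alpha\|x\|_2^2+\beta$ for all $x$. For a scalar kernel $k$, $\mathcal{G}_{k\mathrm{Id}}$ is the product of $D$ copies of the RKHS $\mathcal{H}_k$ with inner product $\sum_d\langle g_d,g'_d\rangle_{\mathcal{H}_k}$. *)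

theory Defs
  imports "HOL-Analysis.Analysis"
begin

text \<open>Elements of the pre-Hilbert space H_0 spanned by the sections k(.,x):
  finite lists of (coefficient, point).\<close>

definition h0_eval :: "('a \<Rightarrow> 'a \<Rightarrow> real) \<Rightarrow> (real \<times> 'a) list \<Rightarrow> 'a \<Rightarrow> real" where
  "h0_eval k cs y = (\<Sum>(c, x)\<leftarrow>cs. c * k y x)"

definition h0_inner :: "('a \<Rightarrow> 'a \<Rightarrow> real) \<Rightarrow> (real \<times> 'a) list \<Rightarrow> (real \<times> 'a) list \<Rightarrow> real" where
  "h0_inner k cs ds = (\<Sum>(c, x)\<leftarrow>cs. \<Sum>(d, z)\<leftarrow>ds. c * d * k x z)"

definition h0_norm :: "('a \<Rightarrow> 'a \<Rightarrow> real) \<Rightarrow> (real \<times> 'a) list \<Rightarrow> real" where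
  "h0_norm k cs = sqrt (h0_inner k cs cs)"

definition h0_diff :: "(real \<times> 'a) list \<Rightarrow> (real \<times> 'a) list \<Rightarrow> (real \<times> 'a) list" where
  "h0_diff cs ds = cs @ map (\<lambda>(d, z). (- d, z)) ds"

text \<open>f belongs to the RKHS H_k and has RKHS norm r: f is the pointwise limit of an
  H_0-Cauchy sequence whose H_0 norms converge to r (completion of H_0).\<close>

definition in_rkhs :: "('a \<Rightarrow> 'a \<Rightarrow> real) \<Rightarrow> ('a \<Rightarrow> real) \<Rightarrow> real \<Rightarrow> bool" where
  "in_rkhs k f r \<longleftrightarrow>
     (\<exists>F :: nat \<Rightarrow> (real \<times> 'a) list.
        (\<forall>\<epsilon>>0. \<exists>N. \<forall>m\<ge>N. \<forall>n\<ge>N. h0_norm k (h0_diff (F m) (F n)) < \<epsilon>) \<and>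
        (\<forall>y. (\<lambda>n. h0_eval k (F n) y) \<longlonglongrightarrow> f y) \<and>
        (\<lambda>n. h0_norm k (F n)) \<longlonglongrightarrow> r)"

definition in_G_kId :: "(real^'n \<Rightarrow> real^'n \<Rightarrow> real) \<Rightarrow> (real^'n \<Rightarrow> real^'n) \<Rightarrow> real \<Rightarrow> bool" where
  "in_G_kId k g r \<longleftrightarrow>
     (\<exists>rs :: 'n \<Rightarrow> real. (\<forall>d. in_rkhs k (\<lambda>x. g x $ d) (rs d)) \<and> r = sqrt (\<Sum>d\<in>UNIV. (rs d)\<^sup>2))"

definition C1_fun :: "('a::euclidean_space \<Rightarrow> 'b::real_normed_vector) \<Rightarrow> bool" where
  "C1_fun f \<longleftrightarrow> (\<exists>f' :: 'a \<Rightarrow> ('a \<Rightarrow>\<^sub>L 'b).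
      (\<forall>x. (f has_derivative blinfun_apply (f' x)) (at x)) \<and> continuous_on UNIV f')"

definition partial :: "'n::finite \<Rightarrow> (real^'n \<Rightarrow> 'b::real_normed_vector) \<Rightarrow> real^'n \<Rightarrow> 'b" where
  "partial i f x = frechet_derivative f (at x) (axis i 1)"

text \<open>b = <nabla, p m> / (2p), with <nabla, F>_i = sum_j d_j F_{ji}.\<close>
definition drift_b :: "(real^'n \<Rightarrow> real) \<Rightarrow> (real^'n \<Rightarrow> real^'n^'n) \<Rightarrow> real^'n \<Rightarrow> real^'n" where
  "drift_b p m x = (1 / (2 * p x)) *\<^sub>R (\<chi> i. \<Sum>j\<in>UNIV. partial j (\<lambda>y. p y *\<^sub>R m y) x $ j $ i)"

text \<open>T_P g = 2<b,g> + <m, nabla g>, (nabla g)_{ij} = d_i g_j, Frobenius pairing.\<close>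
definition stein_op :: "(real^'n \<Rightarrow> real) \<Rightarrow> (real^'n \<Rightarrow> real^'n^'n) \<Rightarrow> (real^'n \<Rightarrow> real^'n) \<Rightarrow> real^'n \<Rightarrow> real" where
  "stein_op p m g x = 2 * (drift_b p m x \<bullet> g x) + (\<Sum>i\<in>UNIV. \<Sum>j\<in>UNIV. m x $ i $ j * partial i g x $ j)"

definition op_norm :: "real^'n^'n \<Rightarrow> real" where
  "op_norm A = onorm (\<lambda>v. A *v v)"

end

theory Submission
  imports Defs "HOL-Real_Asymp.Real_Asymp"
begin

text \<open>Take \<open>g(x) = - w(x) x\<close>. Its \<open>d\<close>-th coordinate is a multiple of the kernel section
  \<open>k(\<cdot>, e\<^sub>d)\<close> of norm one, so \<open>g\<close> has norm \<open>\<surd>D\<close>. Since \<open>\<nabla>g = - w Id - 2 e (v\<^sup>2 + \<parallel>x\<parallel>\<^sup>2)\<^sup>e\<^sup>-\<^sup>1 x x\<^sup>T\<close>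
  with \<open>e = q\<^sub>w - u\<close>, the skew part \<open>c\<close> drops out of the Frobenius pairing and
  \<open>\<T>\<^sub>P g = - w (2\<langle>b,x\<rangle> + \<parallel>\<sigma>\<parallel>\<^sub>F\<^sup>2) - 2 e (v\<^sup>2 + \<parallel>x\<parallel>\<^sup>2)\<^sup>e\<^sup>-\<^sup>1 x\<^sup>T a x\<close>. Dissipativity bounds the first
  term below by \<open>w (\<alpha>\<parallel>x\<parallel>\<^sup>2 - \<beta>)\<close>, and (G) bounds the second by \<open>w max(e,0) \<lambda>\<^sub>a/2 (1 + \<parallel>x\<parallel>\<^sup>q\<^sup>a\<^sup>+\<^sup>1)\<close>,
  which the quadratic term absorbs: trivially if \<open>q\<^sub>a = 0\<close>, and thanks to \<open>e < 2\<alpha>/\<lambda>\<^sub>a\<close> if \<open>q\<^sub>a = 1\<close>.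
  Hence \<open>\<T>\<^sub>P g \<ge> w (\<delta>\<parallel>x\<parallel>\<^sup>2 - C)\<close> with \<open>\<delta> > 0\<close>, which is bounded below and grows like
  \<open>\<parallel>x\<parallel>\<^sup>2\<^sup>(\<^sup>e\<^sup>+\<^sup>1\<^sup>)\<close>.\<close>

lemma in_rkhs_kernel_section: "in_rkhs k (\<lambda>y. c * k y z) (\<bar>c\<bar> * sqrt (k z z))"
proof -
  have "h0_norm k [(c, z)] = \<bar>c\<bar> * sqrt (k z z)"
    by (simp add: h0_norm_def h0_inner_def real_sqrt_mult mult.assoc)
  then show ?thesis
    unfolding in_rkhs_def
    by (intro exI[of _ "\<lambda>_. [(c, z)]"]) (simp add: h0_norm_def h0_inner_def h0_diff_def h0_eval_def)
qed

lemma in_G_kId_weighted_identity: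
  fixes w :: "real^'n \<Rightarrow> real"
  assumes w_pos: "\<And>x. w x > 0"
  shows "in_G_kId (\<lambda>x x'. w x * w x' * (x \<bullet> x')) (\<lambda>x. - w x *\<^sub>R x) (sqrt CARD('n))"
  unfolding in_G_kId_def
proof (intro exI[of _ "\<lambda>_. 1"] conjI allI)
  fix d :: 'n
  define z :: "real^'n" where "z = axis d 1"
  have "w z > 0" by (rule w_pos)
  then have "(\<lambda>y. - 1 / w z * (w y * w z * (y \<bullet> z))) = (\<lambda>y. (- w y *\<^sub>R y) $ d)"
    and "\<bar>- 1 / w z\<bar> * sqrt (w z * w z * (z \<bullet> z)) = 1"
    by (auto simp: z_def inner_axis real_sqrt_mult)
  with in_rkhs_kernel_section[of "\<lambda>x x'. w x * w x' * (x \<bullet> x')" "- 1 / w z" z]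
  show "in_rkhs (\<lambda>x x'. w x * w x' * (x \<bullet> x')) (\<lambda>x. (- w x *\<^sub>R x) $ d) 1"
    by (simp only:)
qed simp

lemma has_derivative_powr_norm_sq:
  fixes x :: "'a::real_inner"
  assumes "s > 0"
  shows "((\<lambda>x. (s + (norm x)\<^sup>2) powr e) has_derivative
           (\<lambda>h. 2 * e * (s + (norm x)\<^sup>2) powr (e - 1) * (x \<bullet> h))) (at x)"
proof -
  have pos: "s + (norm x)\<^sup>2 > 0" using assms by (simp add: add_pos_nonneg)
  have "((\<lambda>x. s + x \<bullet> x) has_derivative (\<lambda>h. x \<bullet> h + h \<bullet> x)) (at x)"
    by (auto intro!: derivative_eq_intros)
  then have "((\<lambda>x. s + (norm x)\<^sup>2) has_derivative (\<lambda>h. 2 * (x \<bullet> h))) (at x)"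
    by (simp add: power2_norm_eq_inner inner_commute)
  from has_derivative_powr[OF this has_derivative_const pos UNIV_I, of e]
  show ?thesis
    using pos by (simp add: powr_diff field_simps)
qed

lemma trace_mult_transpose_self:
  fixes S :: "real^'m^'n"
  shows "(\<Sum>i\<in>UNIV. (S ** transpose S) $ i $ i) = (norm S)\<^sup>2"
  by (simp add: matrix_matrix_mult_def transpose_def inner_vec_def power2_norm_eq_inner)

lemma quadratic_form_mult_transpose_nonneg:
  fixes S :: "real^'m^'n"
  shows "x \<bullet> ((S ** transpose S) *v x) \<ge> 0"
  by (simp add: matrix_vector_mul_assoc[symmetric] dot_lmul_matrix[symmetric])

lemma skew_diag_eq_0:
  fixes C :: "real^'n^'n"
  assumes "transpose C = - C"
  shows "C $ i $ i = 0"
  using arg_cong[OF assms, of "\<lambda>A. A $ i $ i"] by (simp add: transpose_def)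

lemma skew_quadratic_form_eq_0:
  fixes C :: "real^'n^'n"
  assumes "transpose C = - C"
  shows "x \<bullet> (C *v x) = 0"
proof -
  have "x v* C = - (C *v x)"
    using transpose_matrix_vector[of C x]
    by (simp add: assms matrix_vector_mult_def vec_eq_iff sum_negf)
  then have "x \<bullet> (C *v x) = - (x \<bullet> (C *v x))"
    using dot_lmul_matrix[of x C x] by (simp add: inner_commute)
  then show ?thesis by simp
qed

lemma quadratic_form_le_op_norm:
  fixes A :: "real^'n^'n"
  shows "x \<bullet> (A *v x) \<le> op_norm A * (norm x)\<^sup>2"
proof -
  have "x \<bullet> (A *v x) \<le> norm x * norm (A *v x)" by (rule norm_cauchy_schwarz)
  also have "\<dots> \<le> norm x * (op_norm A * norm x)"
    unfolding op_norm_def by (intro mult_left_mono onorm) simp_all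
  finally show ?thesis by (simp add: power2_eq_square mult_ac)
qed

lemma frobenius_identity_plus_rank_one:
  fixes M :: "real^'n^'n"
  shows "(\<Sum>i\<in>UNIV. \<Sum>j\<in>UNIV. M $ i $ j * (s * (if j = i then 1 else 0) + t * (x $ i * x $ j)))
       = s * (\<Sum>i\<in>UNIV. M $ i $ i) + t * (x \<bullet> (M *v x))"
  by (simp add: algebra_simps sum.distrib sum_distrib_left inner_vec_def matrix_vector_mult_def
      if_distrib[of "\<lambda>y. _ * y"] cong: if_cong)

lemma stein_op_weighted_radial:
  fixes S :: "real^'m^'n" and C :: "real^'n^'n" and w :: "real^'n \<Rightarrow> real"
  assumes m_x: "m x = S ** transpose S + C"
    and skew: "transpose C = - C"
    and w_deriv: "(w has_derivative (\<lambda>h. P * (x \<bullet> h))) (at x)"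
  shows "stein_op p m (\<lambda>x. - w x *\<^sub>R x) x
       = - w x * (2 * (drift_b p m x \<bullet> x) + (norm S)\<^sup>2) - P * (x \<bullet> ((S ** transpose S) *v x))"
proof -
  have "((\<lambda>x. - w x *\<^sub>R x) has_derivative (\<lambda>h. - w x *\<^sub>R h - (P * (x \<bullet> h)) *\<^sub>R x)) (at x)"
    using has_derivative_scaleR[OF has_derivative_minus[OF w_deriv] has_derivative_ident]
    by (simp add: algebra_simps)
  then have "partial i (\<lambda>x. - w x *\<^sub>R x) x = - w x *\<^sub>R axis i 1 - (P * x $ i) *\<^sub>R x" for i
    unfolding partial_def by (simp add: frechet_derivative_at[symmetric] inner_axis)
  then have partial_g: "partial i (\<lambda>x. - w x *\<^sub>R x) x $ j
      = - w x * (if j = i then 1 else 0) + - P * (x $ i * x $ j)" for i j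
    by (simp add: axis_def)
  have "(\<Sum>i\<in>UNIV. \<Sum>j\<in>UNIV. m x $ i $ j * partial i (\<lambda>x. - w x *\<^sub>R x) x $ j)
      = - w x * (\<Sum>i\<in>UNIV. m x $ i $ i) + - P * (x \<bullet> (m x *v x))"
    unfolding partial_g by (rule frobenius_identity_plus_rank_one)
  also have "(\<Sum>i\<in>UNIV. m x $ i $ i) = (norm S)\<^sup>2"
    by (simp add: m_x sum.distrib skew_diag_eq_0[OF skew] trace_mult_transpose_self)
  also have "x \<bullet> (m x *v x) = x \<bullet> ((S ** transpose S) *v x)"
    by (simp add: m_x matrix_vector_mult_add_rdistrib inner_add_right skew_quadratic_form_eq_0[OF skew])
  finally show ?thesis
    by (simp add: stein_op_def algebra_simps)
qed

lemma radial_correction_le: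
  fixes e s q L :: real
  assumes "s > 0" "0 \<le> q" "q \<le> L * s"
  shows "e * s powr (e - 1) * q \<le> max e 0 * L * s powr e"
proof (cases "e \<le> 0")
  case True
  then show ?thesis
    using assms by (simp add: mult_nonpos_nonneg)
next
  case False
  have "e * s powr (e - 1) * q \<le> e * s powr (e - 1) * (L * s)"
    using False assms by (intro mult_left_mono) auto
  also have "\<dots> = max e 0 * L * s powr e"
    using False \<open>s > 0\<close> by (simp add: powr_diff field_simps)
  finally show ?thesis .
qed

lemma stein_op_weighted_radial_ge:
  fixes S :: "real^'m^'n" and C :: "real^'n^'n"
  assumes m_x: "m x = S ** transpose S + C"
    and skew: "transpose C = - C"
    and diss: "2 * (drift_b p m x \<bullet> x) + (norm S)\<^sup>2 \<le> - \<alpha> * (norm x)\<^sup>2 + \<beta>"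
    and growth: "op_norm (S ** transpose S) \<le> L"
    and "s > 0"
  shows "(s + (norm x)\<^sup>2) powr e * (\<alpha> * (norm x)\<^sup>2 - \<beta> - 2 * max e 0 * L)
           \<le> stein_op p m (\<lambda>y. - ((s + (norm y)\<^sup>2) powr e) *\<^sub>R y) x"
proof -
  define W where "W = s + (norm x)\<^sup>2"
  define Q where "Q = x \<bullet> ((S ** transpose S) *v x)"
  have W_pos: "W > 0"
    using \<open>s > 0\<close> by (simp add: W_def add_pos_nonneg)
  have "Q \<le> op_norm (S ** transpose S) * (norm x)\<^sup>2"
    unfolding Q_def by (rule quadratic_form_le_op_norm)
  also have "\<dots> \<le> L * W"
  proof (intro mult_mono)
    have "0 \<le> op_norm (S ** transpose S)"
      unfolding op_norm_def by (rule onorm_pos_le) simp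
    then show "0 \<le> L" using growth by linarith
  qed (use growth \<open>s > 0\<close> in \<open>simp_all add: W_def\<close>)
  finally have "e * W powr (e - 1) * Q \<le> max e 0 * L * W powr e"
    unfolding Q_def by (rule radial_correction_le[OF W_pos quadratic_form_mult_transpose_nonneg])
  moreover have "W powr e * (\<alpha> * (norm x)\<^sup>2 - \<beta>) \<le> - (W powr e) * (2 * (drift_b p m x \<bullet> x) + (norm S)\<^sup>2)"
    using mult_left_mono[OF diss, of "W powr e"] by (simp add: algebra_simps)
  moreover have "stein_op p m (\<lambda>y. - ((s + (norm y)\<^sup>2) powr e) *\<^sub>R y) x
      = - (W powr e) * (2 * (drift_b p m x \<bullet> x) + (norm S)\<^sup>2) - 2 * e * W powr (e - 1) * Q"
    using stein_op_weighted_radial[where m = m and x = x and P = "2 * e * W powr (e - 1)",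
        OF m_x skew has_derivative_powr_norm_sq[where x = x and e = e, OF \<open>s > 0\<close>,
          folded W_def]]
    by (simp add: W_def Q_def)
  ultimately show ?thesis
    unfolding W_def[symmetric] by (simp add: algebra_simps)
qed

lemma quadratic_absorbs_correction:
  fixes \<alpha> \<beta> K :: real and q :: nat
  assumes "\<alpha> > 0" "K \<ge> 0" "q \<in> {0, 1}" "q = 1 \<longrightarrow> K < \<alpha>"
  obtains \<delta> C where "\<delta> > 0" "\<And>r. \<delta> * r\<^sup>2 - C \<le> \<alpha> * r\<^sup>2 - \<beta> - K * (1 + r ^ (q + 1))"
proof (cases "q = 0")
  case True
  have "\<alpha> / 2 * r\<^sup>2 - (\<beta> + K + K\<^sup>2 / (2 * \<alpha>)) \<le> \<alpha> * r\<^sup>2 - \<beta> - K * (1 + r ^ (q + 1))" for r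
  proof -
    \<comment> \<open>completing the square: \<open>\<alpha>/2 r\<^sup>2 - K r + K\<^sup>2/(2\<alpha>) = (\<alpha> r - K)\<^sup>2/(2\<alpha>)\<close>\<close>
    have "(\<alpha> * r - K)\<^sup>2 / (2 * \<alpha>) = \<alpha> / 2 * r\<^sup>2 - K * r + K\<^sup>2 / (2 * \<alpha>)"
      using \<open>\<alpha> > 0\<close> by (simp add: field_simps power2_eq_square)
    moreover have "(\<alpha> * r - K)\<^sup>2 / (2 * \<alpha>) \<ge> 0"
      using \<open>\<alpha> > 0\<close> by simp
    ultimately show ?thesis
      using True by (simp add: algebra_simps)
  qed
  then show thesis
    using \<open>\<alpha> > 0\<close> by (intro that[of "\<alpha> / 2" "\<beta> + K + K\<^sup>2 / (2 * \<alpha>)"]) auto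
next
  case False
  with assms have "q = 1" "K < \<alpha>" by auto
  then show thesis
    by (intro that[of "\<alpha> - K" "\<beta> + K"]) (simp_all add: algebra_simps power2_eq_square)
qed

lemma weighted_quadratic_bounded_below:
  fixes T :: "'a::real_normed_vector \<Rightarrow> real"
  assumes "s > 0" "\<delta> > 0"
    and T_ge: "\<And>x. (s + (norm x)\<^sup>2) powr e * (\<delta> * (norm x)\<^sup>2 - C) \<le> T x"
  shows "\<exists>\<nu>. \<forall>x. \<nu> \<le> T x"
proof -
  define W where "W = (s + \<bar>C\<bar> / \<delta>) powr e + s powr e"
  have "- W * \<bar>C\<bar> \<le> T x" for x
  proof (cases "C \<le> \<delta> * (norm x)\<^sup>2")
    case True
    then have "0 \<le> (s + (norm x)\<^sup>2) powr e * (\<delta> * (norm x)\<^sup>2 - C)"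
      by simp
    moreover have "0 \<le> W * \<bar>C\<bar>"
      by (simp add: W_def)
    ultimately show ?thesis
      using T_ge[of x] by linarith
  next
    case False
    then have "(norm x)\<^sup>2 \<le> \<bar>C\<bar> / \<delta>"
      using \<open>\<delta> > 0\<close> by (simp add: field_simps)
    \<comment> \<open>on this ball the weight is bounded whatever the sign of \<open>e\<close>\<close>
    then have "(s + (norm x)\<^sup>2) powr e \<le> W"
      using \<open>s > 0\<close> powr_mono2[of e "s + (norm x)\<^sup>2" "s + \<bar>C\<bar> / \<delta>"]
        powr_mono2'[of e s "s + (norm x)\<^sup>2"]
      by (cases "e \<ge> 0") (auto simp: W_def add_increasing2 add_increasing)
    then have "- W * \<bar>C\<bar> \<le> (s + (norm x)\<^sup>2) powr e * (- \<bar>C\<bar>)"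
      using mult_right_mono[of _ W "\<bar>C\<bar>"] by simp
    also have "\<dots> \<le> (s + (norm x)\<^sup>2) powr e * (\<delta> * (norm x)\<^sup>2 - C)"
    proof (rule mult_left_mono)
      have "0 \<le> \<delta> * (norm x)\<^sup>2" using \<open>\<delta> > 0\<close> by simp
      then show "- \<bar>C\<bar> \<le> \<delta> * (norm x)\<^sup>2 - C" by linarith
    qed simp
    finally show ?thesis
      using T_ge[of x] by linarith
  qed
  then show ?thesis by blast
qed

lemma Liminf_weighted_quadratic:
  fixes T :: "'a::real_normed_vector \<Rightarrow> real"
  assumes "s > 0" "\<delta> > 0"
    and T_ge: "\<And>x. (s + (norm x)\<^sup>2) powr e * (\<delta> * (norm x)\<^sup>2 - C) \<le> T x"
  shows "Liminf at_infinity (\<lambda>x. ereal (norm x powr (- 2 * (e + 1)) * T x)) \<ge> ereal (\<delta> / 2)"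
proof (rule Liminf_bounded)
  define f where "f r = r powr (- 2 * (e + 1)) * ((s + r\<^sup>2) powr e * (\<delta> * r\<^sup>2 - C))" for r
  have "(f \<longlongrightarrow> \<delta>) at_top"
    unfolding f_def using \<open>s > 0\<close> by real_asymp
  then have "\<forall>\<^sub>F r in at_top. \<delta> / 2 < f r"
    using \<open>\<delta> > 0\<close> by (intro order_tendstoD(1)) auto
  then have "\<forall>\<^sub>F x in at_infinity. \<delta> / 2 < f (norm x)"
    using filterlim_norm_at_top unfolding filterlim_iff by blast
  then show "\<forall>\<^sub>F x in at_infinity. ereal (\<delta> / 2) \<le> ereal (norm x powr (- 2 * (e + 1)) * T x)"
  proof eventually_elim
    case (elim x)
    have "f (norm x) \<le> norm x powr (- 2 * (e + 1)) * T x"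
      unfolding f_def using T_ge[of x] by (intro mult_left_mono) auto
    with elim show ?case by simp
  qed
qed

theorem mainTheorem7:
  fixes p :: "real^'n \<Rightarrow> real"
    and sigma :: "real^'n \<Rightarrow> real^'m^'n"
    and c :: "real^'n \<Rightarrow> real^'n^'n"
    and \<alpha> \<beta> lam_b lam_\<sigma> lam_a q\<^sub>w u v :: real
    and q\<^sub>a :: nat
  defines "a \<equiv> (\<lambda>x. sigma x ** transpose (sigma x))"
  defines "m \<equiv> (\<lambda>x. a x + c x)"
  defines "b \<equiv> drift_b p m"
  defines "w \<equiv> (\<lambda>x::real^'n. (v\<^sup>2 + (norm x)\<^sup>2) powr (q\<^sub>w - u))"
  defines "k \<equiv> (\<lambda>x x'. w x * w x' * (x \<bullet> x'))"
  assumes p_pos: "\<forall>x. p x > 0"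
    and p_density: "(p has_integral 1) UNIV"
    and p_C1: "C1_fun p"
    and c_skew: "\<forall>x. transpose (c x) = - c x"
    and pm_C1: "C1_fun (\<lambda>x. p x *\<^sub>R m x)"
    and G_b: "\<forall>x. norm (b x) \<le> lam_b / 4 * (1 + norm x)"
    and G_sigma: "\<forall>x. norm (sigma x) \<le> lam_\<sigma> / 4 * (1 + norm x)"
    and G_a: "\<forall>x. op_norm (a x) \<le> lam_a / 4 * (1 + norm x ^ (q\<^sub>a + 1))"
    and D_diss: "\<forall>x. 2 * (b x \<bullet> x) + (norm (sigma x))\<^sup>2 \<le> - \<alpha> * (norm x)\<^sup>2 + \<beta>"
    and alpha_pos: "\<alpha> > 0" and beta_pos: "\<beta> > 0"
    and lam_a_pos: "lam_a > 0"
    and qa: "q\<^sub>a \<in> {0, 1}"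
    and qw: "q\<^sub>w \<ge> 0" and u: "u \<ge> 0" and v: "v > 0"
    and qa1: "q\<^sub>a = 1 \<longrightarrow> q\<^sub>w - u < 2 * \<alpha> / lam_a"
  shows "\<exists>g :: real^'n \<Rightarrow> real^'n.
           in_G_kId k g (sqrt (real CARD('n))) \<and>
           (\<forall>x. g differentiable (at x)) \<and>
           (\<exists>\<nu> \<eta>. \<eta> > 0 \<and>
              (\<forall>x. stein_op p m g x \<ge> \<nu>) \<and>
              Liminf at_infinity (\<lambda>x. ereal (norm x powr (- 2 * (q\<^sub>w - u + 1)) * stein_op p m g x))
                \<ge> ereal \<eta>)"
proof -
  define e where "e = q\<^sub>w - u"
  define K where "K = max e 0 * lam_a / 2"
  define g where "g = (\<lambda>x. - w x *\<^sub>R x)"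
  have vv: "v\<^sup>2 > 0" using v by simp
  have w_pos: "w x > 0" for x
    using vv by (simp add: w_def add_pos_nonneg)
  have "K \<ge> 0"
    using lam_a_pos by (simp add: K_def)
  moreover have "q\<^sub>a = 1 \<longrightarrow> K < \<alpha>"
    using qa1 alpha_pos lam_a_pos by (auto simp: K_def e_def field_simps max_def)
  ultimately obtain \<delta> C where \<delta>_pos: "\<delta> > 0"
    and absorb: "\<And>r. \<delta> * r\<^sup>2 - C \<le> \<alpha> * r\<^sup>2 - \<beta> - K * (1 + r ^ (q\<^sub>a + 1))"
    using quadratic_absorbs_correction[OF alpha_pos _ qa] by blast
  have T_ge: "(v\<^sup>2 + (norm x)\<^sup>2) powr e * (\<delta> * (norm x)\<^sup>2 - C) \<le> stein_op p m g x" for x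
  proof -
    have "(v\<^sup>2 + (norm x)\<^sup>2) powr e * (\<alpha> * (norm x)\<^sup>2 - \<beta> - K * (1 + norm x ^ (q\<^sub>a + 1)))
        \<le> stein_op p m g x"
      using stein_op_weighted_radial_ge[where e = e, OF _ c_skew[rule_format, of x]
          D_diss[rule_format, of x, unfolded b_def] G_a[rule_format, unfolded a_def] vv]
      by (simp add: g_def w_def e_def m_def a_def K_def mult_ac)
    moreover have "(v\<^sup>2 + (norm x)\<^sup>2) powr e * (\<delta> * (norm x)\<^sup>2 - C)
        \<le> (v\<^sup>2 + (norm x)\<^sup>2) powr e * (\<alpha> * (norm x)\<^sup>2 - \<beta> - K * (1 + norm x ^ (q\<^sub>a + 1)))"
      using absorb[of "norm x"] by (intro mult_left_mono) auto
    ultimately show ?thesis by linarith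
  qed
  have "g differentiable (at x)" for x
    unfolding g_def w_def differentiable_def
    using has_derivative_scaleR[OF has_derivative_minus[OF has_derivative_powr_norm_sq[OF vv]]
        has_derivative_ident] by blast
  moreover have "in_G_kId k g (sqrt (real CARD('n)))"
    unfolding k_def g_def by (rule in_G_kId_weighted_identity[OF w_pos])
  moreover obtain \<nu> where "\<forall>x. \<nu> \<le> stein_op p m g x"
    using weighted_quadratic_bounded_below[OF vv \<delta>_pos T_ge] by blast
  ultimately show ?thesis
    using Liminf_weighted_quadratic[OF vv \<delta>_pos T_ge, unfolded e_def] half_gt_zero[OF \<delta>_pos]
    by blast
qed

end
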